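(* Let $T$ be any $3 \times 9$ matrix with entries in the ring $\mathbb{Z}_{2^{64}}$. Then there exist three distinct columns of $T$ such that the $3 \times 3$ submatrix formed by these columns has even determinant (that is, its determinant is divisible by $2$ in $\mathbb{Z}_{2^{64}}$), and consequently this $3\times 3$ submatrix, viewed as a map $\mathbb{Z}_{2^{64}}^3 \to \mathbb{Z}_{2^{64}}^3$, has a non-trivial kernel.
   Context: $\mathbb{Z}_{2^{64}}$ denotes the ring of integers modulo $2^{64}$. Parity of an element of $\mathbb{Z}_{2^{64}}$ is well defined since $2$ divides $2^{64}$. *)

theory Defs
  imports "HOL-Analysis.Analysis" "HOL-Library.Word"
begin

text \<open>A 3x9 matrix is an element of
  64 word ^ 9 ^ 3 (3 rows, 9 columns).\<close>

definition col_submatrix :: "'a ^ 'n ^ 'm \<Rightarrow> ('k \<Rightarrow> 'n) \<Rightarrow> 'a ^ 'k ^ 'm" where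
  "col_submatrix T c = (\<chi> i k. T $ i $ c k)"

end

theory Submission
  imports Defs
begin

text \<open>Among nine columns of height three only eight parity patterns are possible, so two
  columns agree modulo 2. Subtracting one from the other, the determinant of any 3x3 submatrix
  containing both becomes twice a determinant, hence even. An even element does not divide 1,
  and a square matrix over a finite commutative ring whose determinant does not divide 1 has a
  nontrivial kernel: otherwise the map x \<mapsto> M x is injective, hence surjective, so M has a
  right inverse and det M divides 1.\<close>

lemma det_dvd_if_column_congruent:
  fixes A :: "'a::comm_ring_1^'n^'n"
  assumes "j \<noteq> k" and "column k A = column j A + p *s d"
  shows "p dvd det A"
proof -
  let ?B = "transpose A"
  have row_k: "row k ?B + (-1) *s row j ?B = p *s d"
    using assms(2) by (simp add: vector_sneg_minus1[symmetric])
  have "det A = det (\<chi> r. if r = k then row k ?B + (-1) *s row j ?B else row r ?B)"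
    using det_row_operation[of k j ?B] assms(1) by simp
  also have "\<dots> = det (\<chi> r. if r = k then p *s d else row r ?B)"
    by (simp only: row_k)
  also have "\<dots> = p * det (\<chi> r. if r = k then d else row r ?B)"
    by (rule det_row_mul)
  finally show ?thesis by simp
qed

lemma matrix_right_inverse_if_surj:
  fixes A :: "'a::comm_semiring_1^'n^'m"
  assumes "surj ((*v) A)"
  obtains B where "A ** B = mat 1"
proof -
  define b where "b j = inv ((*v) A) (axis j 1)" for j
  have b: "A *v b j = axis j 1" for j
    using assms by (simp add: b_def surj_f_inv_f)
  have "(A ** (\<chi> i j. b j $ i)) $ i $ j = mat 1 $ i $ j" for i j
  proof -
    have "(A ** (\<chi> i j. b j $ i)) $ i $ j = (A *v b j) $ i"
      by (simp add: matrix_matrix_mult_def matrix_vector_mult_def)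
    also have "\<dots> = mat 1 $ i $ j"
      by (simp add: b axis_def mat_def)
    finally show ?thesis .
  qed
  then have "A ** (\<chi> i j. b j $ i) = mat 1"
    by (simp add: vec_eq_iff)
  then show thesis by (rule that)
qed

lemma nontrivial_kernel_if_det_not_dvd_one:
  fixes A :: "'a::{comm_ring_1,finite}^'n^'n"
  assumes "\<not> det A dvd 1"
  shows "\<exists>x. x \<noteq> 0 \<and> A *v x = 0"
proof (rule ccontr)
  assume trivial_kernel: "\<not> (\<exists>x. x \<noteq> 0 \<and> A *v x = 0)"
  have "inj ((*v) A)"
  proof (rule injI)
    fix x y assume "A *v x = A *v y"
    then have "A *v (x - y) = 0" by (simp add: matrix_vector_mult_diff_distrib)
    with trivial_kernel have "x - y = 0" by blast
    then show "x = y" by simp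
  qed
  then have "surj ((*v) A)"
    by (simp add: finite_UNIV_inj_surj)
  then obtain B where "A ** B = mat 1"
    by (rule matrix_right_inverse_if_surj)
  then have "det A * det B = 1"
    by (metis det_mul det_I)
  with assms show False
    by (metis dvdI)
qed

lemma columns_congruent_mod_2:
  fixes T :: "'a::ring_parity^'n^'m"
  assumes "2 ^ CARD('m) < CARD('n)"
  obtains j k d where "j \<noteq> k" and "column k T = column j T + 2 *s d"
proof -
  let ?parities = "\<lambda>j. \<lambda>i. even (T $ i $ j)"
  have "card (range ?parities) \<le> card (UNIV :: ('m \<Rightarrow> bool) set)"
    by (rule card_mono) auto
  also have "\<dots> = 2 ^ CARD('m)"
    by (simp add: card_fun)
  finally have "card (range ?parities) < card (UNIV :: 'n set)"
    using assms by simp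
  then have "\<not> inj ?parities"
    by (rule pigeonhole)
  then obtain j k where "j \<noteq> k" and same_parity: "?parities j = ?parities k"
    by (auto simp: inj_def)
  have "\<exists>d. T $ i $ k = T $ i $ j + 2 * d" for i
  proof -
    have "even (T $ i $ k) \<longleftrightarrow> even (T $ i $ j)"
      using same_parity by meson
    then have "even (T $ i $ k - T $ i $ j)"
      by simp
    then obtain d where "T $ i $ k - T $ i $ j = 2 * d" ..
    then show ?thesis
      by (auto simp: diff_eq_eq add.commute)
  qed
  then obtain d where "\<And>i. T $ i $ k = T $ i $ j + 2 * d i"
    by metis
  then have "column k T = column j T + 2 *s (\<chi> i. d i)"
    by (simp add: vec_eq_iff column_def)
  with \<open>j \<noteq> k\<close> show thesis by (rule that)
qed

lemma column_col_submatrix: "column i (col_submatrix T c) = column (c i) T"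
  by (simp add: col_submatrix_def column_def)

theorem mainTheorem1:
  fixes T :: "64 word ^ 9 ^ 3"
  shows "\<exists>c :: 3 \<Rightarrow> 9. inj c \<and> even (det (col_submatrix T c))
           \<and> (\<exists>x :: 64 word ^ 3. x \<noteq> 0 \<and> col_submatrix T c *v x = 0)"
proof -
  obtain j k d where "j \<noteq> k" and congruent: "column k T = column j T + 2 *s d"
    using columns_congruent_mod_2[of T] by auto
  have "card {j, k} < card (UNIV :: 9 set)"
    by (simp add: card_insert_if)
  then obtain e :: 9 where "e \<notin> {j, k}"
    by (metis card_mono finite subsetI leD)
  define c :: "3 \<Rightarrow> 9" where "c = (\<lambda>i. if i = 1 then j else if i = 2 then k else e)"
  have "inj c"
    unfolding inj_def c_def using \<open>j \<noteq> k\<close> \<open>e \<notin> {j, k}\<close> exhaust_3 by auto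
  have "column 2 (col_submatrix T c) = column 1 (col_submatrix T c) + 2 *s d"
    by (simp add: column_col_submatrix c_def congruent)
  then have even_det: "even (det (col_submatrix T c))"
    by (rule det_dvd_if_column_congruent[rotated]) simp
  then have "\<not> det (col_submatrix T c) dvd 1"
    by (meson dvd_trans odd_one)
  then show ?thesis
    using \<open>inj c\<close> even_det nontrivial_kernel_if_det_not_dvd_one by blast
qed

end
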